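(* Let $T:\mathbb{Z}\to\mathbb{Z}$ be defined by $T(n)=n/2$ if $n$ is even and $T(n)=(3n+1)/2$ if $n$ is odd, and let $[2]_3$ be the set of integers congruent to $2\pmod 3$. Define $T^*:[2]_3\to\mathbb{Z}$ by $$T^*(n)=\begin{cases} T(n)=\frac{3n+1}{2}, & n\equiv -1\pmod 6,\\ T^2(n)=\frac{3n+2}{4}, & n\equiv 2\pmod{12},\\ T^3(n)=\frac{3n+4}{8}, & n\equiv -4\pmod{24},\\ T^4(n)=\frac{3n+8}{16}, & n\equiv 8\pmod{48},\\ T^5(n)=\frac{3n+16}{32}, & n\equiv -16\pmod{96},\\ T^6(n)=\frac{3n+32}{64}, & n\equiv 32\pmod{192},\\ T^6(n)=\frac{n}{64}, & n\equiv -64\pmod{192}.\end{cases}$$ Then (i) the range of $T^*$ is exactly $[2]_3$; and (ii) for every $n\in[2]_3$, the $T^*$-trajectory $((T^* )^k(n))_{k\ge 0}$ consists of finitely many numbers congruent to $5\pmod 9$ followed only by numbers congruent to $2$ or $8\pmod 9$.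
   Context: The seven residue classes in the definition partition $[2]_3$. $T^k$ and $(T^* )^k$ denote $k$-fold iterates, with the $0$-th iterate the identity. *)

theory Defs
  imports Main
begin

definition T :: "int \<Rightarrow> int" where
  "T n = (if even n then n div 2 else (3 * n + 1) div 2)"

definition cls23 :: "int set" where
  "cls23 = {n. n mod 3 = 2}"

text \<open>The accelerated map T* on [2]_3 (its value outside [2]_3 is irrelevant;
  we set it to n). The seven residue classes partition [2]_3.\<close>
definition Tstar :: "int \<Rightarrow> int" where
  "Tstar n =
     (if n mod 6 = 5 then T n
      else if n mod 12 = 2 then (T ^^ 2) n
      else if n mod 24 = 20 then (T ^^ 3) n
      else if n mod 48 = 8 then (T ^^ 4) n
      else if n mod 96 = 80 then (T ^^ 5) n
      else if n mod 192 = 32 then (T ^^ 6) n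
      else if n mod 192 = 128 then (T ^^ 6) n
      else n)"

end

theory Submission imports Defs begin

(* Writing n = 2^j (2a+1), the map T reaches 3a+2 after j+1 steps. Hence T* sends the
   first six classes to numbers 9m+8 or 9m+2, never 5 mod 9, and the last class
   192m+128 = 64(3m+2) onto [2]_3 via 3m+2, which is congruent to 192m+128 mod 9 and
   smaller in absolute value. So a term 5 mod 9 of a trajectory can only follow a term
   5 mod 9 of larger absolute value, and these terms form a finite initial segment. *)

lemma funpow_in_invariant:
  assumes "f ` A \<subseteq> A" "x \<in> A"
  shows "(f ^^ k) x \<in> A"
  using assms by (induction k) auto

lemma funpow_preserves_not:
  assumes "f ` A \<subseteq> A" "\<And>x. x \<in> A \<Longrightarrow> P (f x) \<Longrightarrow> P x" "x \<in> A" "\<not> P x"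
  shows "\<not> P ((f ^^ k) x)"
proof (induction k)
  case 0
  then show ?case using assms(4) by simp
next
  case (Suc k)
  have "(f ^^ k) x \<in> A" using funpow_in_invariant assms(1,3) .
  then show ?case using assms(2) Suc.IH by auto
qed

lemma trajectory_prefix_then_never:
  fixes w :: "'a \<Rightarrow> nat"
  assumes maps: "f ` A \<subseteq> A"
    and reflects: "\<And>x. x \<in> A \<Longrightarrow> P (f x) \<Longrightarrow> P x \<and> w (f x) < w x"
    and "x \<in> A"
  shows "\<exists>K. (\<forall>k<K. P ((f ^^ k) x)) \<and> (\<forall>k\<ge>K. \<not> P ((f ^^ k) x))"
  using \<open>x \<in> A\<close>
proof (induction "w x" arbitrary: x rule: less_induct)
  case less
  have never: "\<forall>k. \<not> P ((f ^^ k) y)" if "y \<in> A" "\<not> P y" for y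
    using funpow_preserves_not[of f A P y] maps reflects that by blast
  show ?case
  proof (cases "P x")
    case False
    then show ?thesis using never[OF less.prems] by blast
  next
    case True
    have "f x \<in> A" using maps less.prems by blast
    have "\<exists>K. (\<forall>k<K. P ((f ^^ k) (f x))) \<and> (\<forall>k\<ge>K. \<not> P ((f ^^ k) (f x)))"
    proof (cases "P (f x)")
      case True
      then have "w (f x) < w x" using reflects[OF less.prems] by blast
      then show ?thesis using less.hyps \<open>f x \<in> A\<close> by blast
    next
      case False
      then show ?thesis using never[OF \<open>f x \<in> A\<close>] by blast
    qed
    then obtain K where prefix: "\<forall>k<K. P ((f ^^ k) (f x))"
      and tail: "\<forall>k\<ge>K. \<not> P ((f ^^ k) (f x))" by blast
    have "\<forall>k<Suc K. P ((f ^^ k) x)"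
      using prefix True by (simp add: All_less_Suc2 funpow_Suc_right del: funpow.simps)
    moreover have "\<forall>k\<ge>Suc K. \<not> P ((f ^^ k) x)"
    proof (intro allI impI)
      fix k assume "Suc K \<le> k"
      then obtain j where "k = Suc j" "K \<le> j" by (cases k) auto
      then show "\<not> P ((f ^^ k) x)" using tail by (simp add: funpow_Suc_right del: funpow.simps)
    qed
    ultimately show ?thesis by blast
  qed
qed

lemma mod_dvd_mult_add: "(d::int) dvd c \<Longrightarrow> (c * m + r) mod d = r mod d"
  by (erule dvdE) (simp add: mult.assoc)

lemma T_double: "T (2 * m) = m"
  by (simp add: T_def)

lemma T_odd: "T (2 * a + 1) = 3 * a + 2"
  by (simp add: T_def)

lemma funpow_T_pow2: "(T ^^ j) (2 ^ j * m) = m"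
  by (induction j arbitrary: m)
    (simp_all add: funpow_Suc_right mult.assoc T_double del: funpow.simps)

lemma funpow_T_pow2_odd: "(T ^^ Suc j) (2 ^ j * (2 * a + 1)) = 3 * a + 2"
  by (simp add: funpow_T_pow2 T_odd)

lemma Tstar_mod6_5: "Tstar (6 * m + 5) = 9 * m + 8"
proof -
  have "T (6 * m + 5) = 9 * m + 8"
    using funpow_T_pow2_odd[of 0 "3 * m + 2"] by (simp add: algebra_simps)
  then show ?thesis by (simp add: Tstar_def mod_dvd_mult_add)
qed

lemma Tstar_mod12_2: "Tstar (12 * m + 2) = 9 * m + 2"
proof -
  have "(T ^^ 2) (12 * m + 2) = 9 * m + 2"
    using funpow_T_pow2_odd[of 1 "3 * m"] by (simp add: numeral_eq_Suc algebra_simps)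
  then show ?thesis by (simp add: Tstar_def mod_dvd_mult_add)
qed

lemma Tstar_mod24_20: "Tstar (24 * m + 20) = 9 * m + 8"
proof -
  have "(T ^^ 3) (24 * m + 20) = 9 * m + 8"
    using funpow_T_pow2_odd[of 2 "3 * m + 2"] by (simp add: numeral_eq_Suc algebra_simps)
  then show ?thesis by (simp add: Tstar_def mod_dvd_mult_add)
qed

lemma Tstar_mod48_8: "Tstar (48 * m + 8) = 9 * m + 2"
proof -
  have "(T ^^ 4) (48 * m + 8) = 9 * m + 2"
    using funpow_T_pow2_odd[of 3 "3 * m"] by (simp add: numeral_eq_Suc algebra_simps)
  then show ?thesis by (simp add: Tstar_def mod_dvd_mult_add)
qed

lemma Tstar_mod96_80: "Tstar (96 * m + 80) = 9 * m + 8"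
proof -
  have "(T ^^ 5) (96 * m + 80) = 9 * m + 8"
    using funpow_T_pow2_odd[of 4 "3 * m + 2"] by (simp add: numeral_eq_Suc algebra_simps)
  then show ?thesis by (simp add: Tstar_def mod_dvd_mult_add)
qed

lemma Tstar_mod192_32: "Tstar (192 * m + 32) = 9 * m + 2"
proof -
  have "(T ^^ 6) (192 * m + 32) = 9 * m + 2"
    using funpow_T_pow2_odd[of 5 "3 * m"] by (simp add: numeral_eq_Suc algebra_simps)
  then show ?thesis by (simp add: Tstar_def mod_dvd_mult_add)
qed

lemma Tstar_mod192_128: "Tstar (192 * m + 128) = 3 * m + 2"
proof -
  have "(T ^^ 6) (192 * m + 128) = 3 * m + 2"
    using funpow_T_pow2[of 6 "3 * m + 2"] by (simp add: numeral_eq_Suc algebra_simps)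
  then show ?thesis by (simp add: Tstar_def mod_dvd_mult_add)
qed

lemmas Tstar_classes = Tstar_mod6_5 Tstar_mod12_2 Tstar_mod24_20 Tstar_mod48_8
  Tstar_mod96_80 Tstar_mod192_32 Tstar_mod192_128

lemma mod_mult2_cases:
  fixes n d :: int
  shows "n mod (d * 2) = n mod d \<or> n mod (d * 2) = n mod d + d"
proof -
  have "n div d mod 2 = 0 \<or> n div d mod 2 = 1" by presburger
  then show ?thesis using zmod_zmult2_eq[of 2 n d] by auto
qed

lemma cls23_cases:
  assumes "n \<in> cls23"
  obtains m where "n = 6 * m + 5" | m where "n = 12 * m + 2" | m where "n = 24 * m + 20"
    | m where "n = 48 * m + 8" | m where "n = 96 * m + 80" | m where "n = 192 * m + 32"
    | m where "n = 192 * m + 128"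
proof -
  have "n mod 3 = 2" using assms by (simp add: cls23_def)
  then have "n mod 6 = 2 \<or> n mod 6 = 5"
    using mod_mult2_cases[of n 3] by simp
  moreover have "n mod 12 = 2 \<or> n mod 12 = 8" if "n mod 6 = 2"
    using mod_mult2_cases[of n 6] that by simp
  moreover have "n mod 24 = 8 \<or> n mod 24 = 20" if "n mod 12 = 8"
    using mod_mult2_cases[of n 12] that by simp
  moreover have "n mod 48 = 8 \<or> n mod 48 = 32" if "n mod 24 = 8"
    using mod_mult2_cases[of n 24] that by simp
  moreover have "n mod 96 = 32 \<or> n mod 96 = 80" if "n mod 48 = 32"
    using mod_mult2_cases[of n 48] that by simp
  moreover have "n mod 192 = 32 \<or> n mod 192 = 128" if "n mod 96 = 32"
    using mod_mult2_cases[of n 96] that by simp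
  moreover have "n = d * (n div d) + r" if "n mod d = r" for d r
    using that mult_div_mod_eq[of d n] by simp
  ultimately show ?thesis using that by metis
qed

lemma Tstar_maps_cls23: "Tstar ` cls23 \<subseteq> cls23"
proof
  fix y assume "y \<in> Tstar ` cls23"
  then obtain n where "n \<in> cls23" "y = Tstar n" by blast
  from \<open>n \<in> cls23\<close> show "y \<in> cls23"
    by (cases rule: cls23_cases)
      (simp_all add: \<open>y = Tstar n\<close> cls23_def Tstar_classes mod_dvd_mult_add)
qed

lemma cls23_subset_Tstar_image: "cls23 \<subseteq> Tstar ` cls23"
proof
  fix x assume "x \<in> cls23"
  then have "x mod 3 = 2" by (simp add: cls23_def)
  then obtain m where x: "x = 3 * m + 2"
    using mult_div_mod_eq[of 3 x] by metis
  have "192 * m + 128 \<in> cls23" by (simp add: cls23_def mod_dvd_mult_add)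
  moreover have "Tstar (192 * m + 128) = x" by (simp add: x Tstar_mod192_128)
  ultimately show "x \<in> Tstar ` cls23" by force
qed

lemma Tstar_mod9_eq_5:
  assumes "n \<in> cls23" "Tstar n mod 9 = 5"
  shows "n mod 9 = 5 \<and> nat \<bar>Tstar n\<bar> < nat \<bar>n\<bar>"
  using assms(1)
proof (cases rule: cls23_cases)
  case (7 m)
  have "n = 9 * (21 * m + 14) + Tstar n" by (simp add: 7 Tstar_mod192_128)
  then have "n mod 9 = Tstar n mod 9" by (metis dvd_refl mod_dvd_mult_add)
  moreover have "nat \<bar>3 * m + 2\<bar> < nat \<bar>192 * m + 128\<bar>"
    by (cases "m \<ge> 0") (simp_all add: abs_if)
  ultimately show ?thesis using assms(2) by (simp add: 7 Tstar_mod192_128)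
qed (use assms(2) in \<open>simp_all add: Tstar_classes mod_dvd_mult_add\<close>)

lemma cls23_mod9: "n \<in> cls23 \<Longrightarrow> n mod 9 \<noteq> 5 \<Longrightarrow> n mod 9 = 2 \<or> n mod 9 = 8"
  unfolding cls23_def mem_Collect_eq by presburger

theorem theorem5:
  shows "Tstar ` cls23 = cls23 \<and>
         (\<forall>n \<in> cls23. \<exists>K::nat.
           (\<forall>k<K. (Tstar ^^ k) n mod 9 = 5) \<and>
           (\<forall>k\<ge>K. (Tstar ^^ k) n mod 9 = 2 \<or> (Tstar ^^ k) n mod 9 = 8))"
proof (intro conjI ballI)
  show "Tstar ` cls23 = cls23"
    using Tstar_maps_cls23 cls23_subset_Tstar_image by blast
next
  fix n assume "n \<in> cls23"
  obtain K where prefix: "\<forall>k<K. (Tstar ^^ k) n mod 9 = 5"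
    and tail: "\<forall>k\<ge>K. (Tstar ^^ k) n mod 9 \<noteq> 5"
    using trajectory_prefix_then_never[where w = "\<lambda>x. nat \<bar>x\<bar>" and P = "\<lambda>x. x mod 9 = 5",
        OF Tstar_maps_cls23 Tstar_mod9_eq_5 \<open>n \<in> cls23\<close>]
    by blast
  have "(Tstar ^^ k) n mod 9 = 2 \<or> (Tstar ^^ k) n mod 9 = 8" if "K \<le> k" for k
    using cls23_mod9[OF funpow_in_invariant[OF Tstar_maps_cls23 \<open>n \<in> cls23\<close>]] tail that
    by blast
  with prefix show "\<exists>K::nat. (\<forall>k<K. (Tstar ^^ k) n mod 9 = 5) \<and>
      (\<forall>k\<ge>K. (Tstar ^^ k) n mod 9 = 2 \<or> (Tstar ^^ k) n mod 9 = 8)"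
    by blast
qed

end
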